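(* In the FHMA network described below, if the intensity $\lambda$ satisfies $$\lambda<\frac{\ln\frac{3}{2}-\frac{1}{6}\theta r_0^\alpha WN_0}{c_dr_0^d\theta^\delta C(\delta)\left(2^{-\delta}-2^{\delta-1}3^{-\delta}\right)},$$ then the integer number of sub-bands $N_{\mathrm{opt}}\ge 1$ that minimizes the mean local delay $D(N)$ equals $2$.
   Context: Model: transmitters form a homogeneous Poisson point process $\Phi$ of intensity $\lambda>0$ in $\mathbb{R}^d$; the typical receiver is at the origin and its desired transmitter $x_0\in\Phi$ is at distance $r_0>0$; probabilities are under the Palm distribution at $x_0$. Time is slotted. Path loss $\kappa r^{-\alpha}$ with $\alpha>d$, $\delta=d/\alpha\in(0,1)$. Power fading coefficients are i.i.d. exponential with mean $1$ over transmitters and slots, independent of everything. Unit power, always backlogged transmitters. Bandwidth $W$, noise power spectral density $N_r$, $N_0=N_r/\kappa$, SINR threshold $\theta>0$. $c_d$ is the volume of the unit ball in $\mathbb{R}^d$, $C(\delta)=\Gamma(1+\delta)\Gamma(1-\delta)=\frac{\pi\delta}{\sin(\pi\delta)}$. FHMA with $N$ sub-bands: each transmitter $x$ independently picks a sub-band $\mathcal{S}_k(x)$ uniformly from $\{1,\dots,N\}$ in each slot $k$; $\mathrm{SINR}_k=\frac{h_{k,x_0}r_0^{-\alpha}}{WN_0/N+\sum_{x\in\Phi\setminus\{x_0\}}h_{k,x}|x|^{-\alpha}\mathbf{1}(\mathcal{S}_k(x)=\mathcal{S}_k(x_0))}$; a slot is successful if $\mathrm{SINR}_k>\theta$; the local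 delay is the number of slots until the $N$-th successful slot and $D(N)$ is its mean. (The mean equals $D(N)=N\exp\left(\frac{\lambda c_d r_0^d\theta^{\delta}C(\delta)}{(N-1)^{1-\delta}N^{\delta}}+\frac{\theta r_0^\alpha WN_0}{N}\right)$, with $D(1)=\infty$.) *)

theory Defs
  imports "HOL-Analysis.Analysis"
begin

definition C_delta :: "real \<Rightarrow> real" where
  "C_delta \<delta> = Gamma (1 + \<delta>) * Gamma (1 - \<delta>)"

text \<open>Parameters: intensity lam, dimension d, path-loss exponent alpha,
  link distance r0, SINR threshold theta, bandwidth W, N0 = N_r / kappa.
  c_d = unit_ball_vol d is the volume of the unit ball in R^d.\<close>
definition fhma_delay ::
  "real \<Rightarrow> nat \<Rightarrow> real \<Rightarrow> real \<Rightarrow> real \<Rightarrow> real \<Rightarrow> real \<Rightarrow> nat \<Rightarrow> ereal" where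
  "fhma_delay lam d alpha r0 theta W N0 N =
     (let \<delta> = real d / alpha in
      if N \<le> 1 then \<infinity>
      else ereal (real N * exp (lam * unit_ball_vol (real d) * r0 ^ d * theta powr \<delta> * C_delta \<delta>
                     / ((real N - 1) powr (1 - \<delta>) * real N powr \<delta>)
                   + theta * r0 powr alpha * W * N0 / real N)))"

end

theory Submission
  imports Defs
begin

text \<open>Write \<open>D(N) = N exp (a h(N) + b/N)\<close> with \<open>h(N) = (N-1)^(\<delta>-1) N^(-\<delta>)\<close> (\<open>interference_factor\<close>), so that
  \<open>D(2) < D(M)\<close> means \<open>a (h(2) - h(M)) + b (1/2 - 1/M) < ln (M/2)\<close>. The hypothesis says this
  holds for \<open>M = 3\<close>, i.e. \<open>E := a (h(2) - h(3)) + b/6 < ln (3/2)\<close>. For every \<open>M \<ge> 3\<close> there is a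
  constant \<open>c\<close> with \<open>h(2) - h(M) \<le> c (h(2) - h(3))\<close>, \<open>1/2 - 1/M \<le> c/6\<close> and
  \<open>c ln (3/2) \<le> ln (M/2)\<close>; then the left-hand side is at most \<open>c E < ln (M/2)\<close>. The bounds on \<open>h\<close>
  come from \<open>exp x \<ge> 1 + x\<close> (lower bounds on \<open>h(M)\<close>) and convexity of \<open>exp\<close> (upper bound on
  \<open>h(3)\<close>, a weighted AM-GM inequality).\<close>

definition interference_factor :: "real \<Rightarrow> nat \<Rightarrow> real" where
  "interference_factor s M = (real M - 1) powr (s - 1) * real M powr (- s)"

lemma interference_factor_pos: "2 \<le> M \<Longrightarrow> 0 < interference_factor s M"
  by (simp add: interference_factor_def)

lemma fhma_delay_eq:
  fixes d :: nat and alpha :: real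
  assumes "2 \<le> N"
  defines "\<delta> \<equiv> real d / alpha"
  shows "fhma_delay lam d alpha r0 theta W N0 N =
    ereal (real N * exp (lam * (unit_ball_vol (real d) * r0 ^ d * theta powr \<delta> * C_delta \<delta>)
                           * interference_factor \<delta> N
                         + theta * r0 powr alpha * W * N0 / real N))"
proof -
  have "1 / ((real N - 1) powr (1 - \<delta>) * real N powr \<delta>) = interference_factor \<delta> N"
    using assms(1) by (simp add: interference_factor_def powr_minus_divide powr_diff)
  then show ?thesis
    using assms(1) unfolding fhma_delay_def Let_def \<delta>_def[symmetric]
    by (simp add: field_simps)
qed

lemma interference_factor_ge:
  assumes "2 \<le> M"
  shows "(1 + (1 - s) * ln (real M / (real M - 1))) / real M \<le> interference_factor s M"
proof -
  have "interference_factor s M = (real M / (real M - 1)) powr (1 - s) / real M"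
    using assms by (simp add: interference_factor_def powr_divide powr_diff powr_minus_divide
        field_simps)
  also have "\<dots> = exp ((1 - s) * ln (real M / (real M - 1))) / real M"
    using assms by (simp add: powr_def)
  finally show ?thesis
    by (simp add: divide_right_mono)
qed

lemma interference_factor_ge_inverse:
  assumes "2 \<le> M" "s \<le> 1"
  shows "1 / real M \<le> interference_factor s M"
proof -
  have "0 \<le> (1 - s) * ln (real M / (real M - 1))"
    using assms by simp
  then have "1 / real M \<le> (1 + (1 - s) * ln (real M / (real M - 1))) / real M"
    by (simp add: divide_right_mono)
  then show ?thesis
    using interference_factor_ge[OF assms(1), of s] by linarith
qed

text \<open>Weighted AM-GM: \<open>2^(s-1) 3^(-s) \<le> (1-s)/2 + s/3\<close>.\<close>
lemma interference_factor_3_le: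
  assumes "0 \<le> s" "s \<le> 1"
  shows "interference_factor s 3 \<le> (1 - s) / 2 + s / 3"
proof -
  have "interference_factor s 3 = exp ((1 - s) * (- ln 2) + s * (- ln 3))"
    by (simp add: interference_factor_def powr_def algebra_simps flip: exp_add)
  also have "\<dots> \<le> (1 - s) * exp (- ln 2) + s * exp (- ln (3::real))"
    using convex_onD[OF exp_convex, of s "- ln 2" "- ln 3"] assms by simp
  finally show ?thesis
    by (simp add: exp_minus)
qed

lemma interference_factor_2_ge: "s \<le> 1 \<Longrightarrow> (5 - 2 * s) / 6 \<le> interference_factor s 2"
  using interference_factor_ge[of 2 s] ln2_ge_two_thirds mult_left_mono[of "2/3" "ln 2" "1 - s"]
  by simp

lemma interference_factor_4_ge: "s \<le> 1 \<Longrightarrow> (5 - s) / 16 \<le> interference_factor s 4"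
proof -
  assume "s \<le> 1"
  have "1/4 \<le> ln (4/3 :: real)"
    using ln_le_minus_one[of "3/4 :: real"] by (simp add: ln_div)
  then show ?thesis
    using interference_factor_ge[of 4 s] \<open>s \<le> 1\<close> mult_left_mono[of "1/4" "ln (4/3)" "1 - s"]
    by simp
qed

lemma interference_factor_3_less_2:
  assumes "0 < s" "s < 1"
  shows "interference_factor s 3 < interference_factor s 2"
proof -
  have "interference_factor s 3 \<le> (1 - s) / 2 + s / 3"
    using interference_factor_3_le assms by simp
  also have "\<dots> < (5 - 2 * s) / 6"
    using assms by (simp add: field_simps)
  also have "\<dots> \<le> interference_factor s 2"
    using interference_factor_2_ge assms by simp
  finally show ?thesis .
qed

lemma mult_ln_le_of_power_le:
  fixes x y :: real
  assumes "0 < x" "0 < y" "x ^ p \<le> y ^ q"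
  shows "real p * ln x \<le> real q * ln y"
  using assms by (metis ln_le_cancel_iff ln_realpow zero_less_power)

lemma interference_gap_constant:
  assumes "0 < s" "s < 1" "3 \<le> M"
  obtains c where "0 < c"
    and "interference_factor s 2 - interference_factor s M
           \<le> c * (interference_factor s 2 - interference_factor s 3)"
    and "1/2 - 1 / real M \<le> c / 6" and "c * ln (3/2) \<le> ln (real M / 2)"
proof -
  have h2: "(5 - 2 * s) / 6 \<le> interference_factor s 2"
    using interference_factor_2_ge assms by simp
  have "interference_factor s 3 \<le> (1 - s) / 2 + s / 3"
    using interference_factor_3_le assms by simp
  also have "\<dots> = (3 - s) / 6"
    by (simp add: field_simps)
  finally have h3: "interference_factor s 3 \<le> (3 - s) / 6" .
  have hM: "1 / real M \<le> interference_factor s M"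
    using interference_factor_ge_inverse[of M s] assms by simp
  consider "M = 3" | "M = 4" | "M = 5" | "M = 6" | "7 \<le> M"
    using assms(3) by linarith
  then show ?thesis
  proof cases
    case 1
    then show ?thesis by (intro that[of 1]) auto
  next
    case 2
    have "5 * ln (3/2) \<le> 3 * ln (2::real)"
      using mult_ln_le_of_power_le[of "3/2" 2 5 3] by (simp add: power_divide)
    then show ?thesis
      using 2 h2 h3 interference_factor_4_ge[of s] assms by (intro that[of "5/3"]) auto
  next
    case 3
    have "2 * ln (3/2) \<le> 1 * ln (5/2::real)"
      using mult_ln_le_of_power_le[of "3/2" "5/2" 2 1] by (simp add: power_divide)
    then show ?thesis
      using 3 h2 h3 hM assms by (intro that[of 2]) auto
  next
    case 4
    have "5 * ln (3/2) \<le> 2 * ln (3::real)"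
      using mult_ln_le_of_power_le[of "3/2" 3 5 2] by (simp add: power_divide)
    then show ?thesis
      using 4 h2 h3 hM assms by (intro that[of "5/2"]) auto
  next
    case 5
    have "3 * ln (3/2) \<le> 1 * ln (7/2::real)"
      using mult_ln_le_of_power_le[of "3/2" "7/2" 3 1] by (simp add: power_divide)
    also have "\<dots> \<le> ln (real M / 2)"
      using 5 by simp
    finally have "3 * ln (3/2) \<le> ln (real M / 2)" .
    moreover have "0 < interference_factor s M"
      using 5 interference_factor_pos by simp
    ultimately show ?thesis
      using h2 h3 assms by (intro that[of 3]) auto
  qed
qed

lemma delay_2_less:
  fixes a b s :: real
  assumes "0 < s" "s < 1" "0 \<le> a" "0 \<le> b" "3 \<le> M"
    and "a * (interference_factor s 2 - interference_factor s 3) + b / 6 < ln (3/2)"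
  shows "2 * exp (a * interference_factor s 2 + b / 2)
           < real M * exp (a * interference_factor s M + b / real M)"
proof -
  obtain c where c: "0 < c"
    and gap: "interference_factor s 2 - interference_factor s M
                \<le> c * (interference_factor s 2 - interference_factor s 3)"
    and noise: "1/2 - 1 / real M \<le> c / 6" and ln_bound: "c * ln (3/2) \<le> ln (real M / 2)"
    using interference_gap_constant assms(1-3,5) by blast
  have "(a * interference_factor s 2 + b / 2) - (a * interference_factor s M + b / real M)
        = a * (interference_factor s 2 - interference_factor s M) + b * (1/2 - 1 / real M)"
    by (simp add: algebra_simps)
  also have "\<dots> \<le> a * (c * (interference_factor s 2 - interference_factor s 3)) + b * (c / 6)"
    using gap noise assms(3,4) by (intro add_mono mult_left_mono)
  also have "\<dots> = c * (a * (interference_factor s 2 - interference_factor s 3) + b / 6)"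
    by (simp add: algebra_simps)
  also have "\<dots> < c * ln (3/2)"
    using c assms(6) by simp
  also have "\<dots> \<le> ln (real M / 2)"
    by (fact ln_bound)
  finally have "exp ((a * interference_factor s 2 + b / 2) - (a * interference_factor s M + b / real M))
                  < exp (ln (real M / 2))"
    by simp
  also have "\<dots> = real M / 2"
    using assms(5) by simp
  finally show ?thesis
    unfolding exp_diff by (simp add: field_simps)
qed

lemma minimizers_eq_singleton:
  fixes f :: "'a \<Rightarrow> 'b::linorder"
  assumes "P n" and "\<And>m. P m \<Longrightarrow> m \<noteq> n \<Longrightarrow> f n < f m"
  shows "{k. P k \<and> (\<forall>m. P m \<longrightarrow> f k \<le> f m)} = {n}"
  using assms by (force simp: not_le[symmetric])

theorem corollary1:
  fixes lam alpha r0 theta W Nr kappa :: real and d :: nat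
  assumes "d \<ge> 1" and "alpha > real d" and "lam > 0" and "r0 > 0" and "theta > 0"
    and "W > 0" and "Nr \<ge> 0" and "kappa > 0"
    and "lam < (ln (3/2) - (1/6) * theta * r0 powr alpha * W * (Nr / kappa))
          / (unit_ball_vol (real d) * r0 ^ d * theta powr (real d / alpha) * C_delta (real d / alpha)
             * (2 powr (- (real d / alpha)) - 2 powr (real d / alpha - 1) * 3 powr (- (real d / alpha))))"
  shows "{N :: nat. N \<ge> 1 \<and> (\<forall>M. M \<ge> 1 \<longrightarrow>
            fhma_delay lam d alpha r0 theta W (Nr / kappa) N \<le> fhma_delay lam d alpha r0 theta W (Nr / kappa) M)}
         = {2}"
proof -
  define \<delta> where "\<delta> = real d / alpha"
  define K where "K = unit_ball_vol (real d) * r0 ^ d * theta powr \<delta> * C_delta \<delta>"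
  define b where "b = theta * r0 powr alpha * W * (Nr / kappa)"
  define x where "x = interference_factor \<delta> 2 - interference_factor \<delta> 3"
  have \<delta>: "0 < \<delta>" "\<delta> < 1"
    using assms(1,2) by (auto simp: \<delta>_def field_simps)
  have "0 \<le> b"
    using assms(4-8) by (simp add: b_def)
  have "0 < K"
    using \<delta> assms(4,5) by (simp add: K_def C_delta_def)
  moreover have "0 < x"
    using interference_factor_3_less_2[OF \<delta>] by (simp add: x_def)
  moreover have "lam < (ln (3/2) - b / 6) / (K * x)"
    using assms(9) by (simp add: \<delta>_def [symmetric] K_def b_def x_def interference_factor_def
        algebra_simps)
  ultimately have hyp: "lam * K * x + b / 6 < ln (3/2)"
    by (simp add: pos_less_divide_eq algebra_simps)
  have delay: "fhma_delay lam d alpha r0 theta W (Nr / kappa) N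
                = ereal (real N * exp (lam * K * interference_factor \<delta> N + b / real N))"
    if "2 \<le> N" for N
    using fhma_delay_eq[OF that] by (simp add: \<delta>_def K_def b_def)
  have "fhma_delay lam d alpha r0 theta W (Nr / kappa) 2 < fhma_delay lam d alpha r0 theta W (Nr / kappa) M"
    if "M \<ge> 1" "M \<noteq> 2" for M
  proof (cases "M = 1")
    case False
    then have "3 \<le> M"
      using that by simp
    then show ?thesis
      using delay_2_less[OF \<delta>, of "lam * K" b M] hyp assms(3) \<open>0 \<le> b\<close> \<open>0 < K\<close>
      by (simp add: delay x_def)
  qed (simp add: fhma_delay_def Let_def)
  then show ?thesis
    by (intro minimizers_eq_singleton) simp_all
qed

end
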